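(* Let $(\mathcal{Y},d_{\mathcal{Y}})$ be a complete metric space admitting a conical geodesic bicombing and admitting a quantization $(Q_q:\mathbb{R}^{D_q}\to\mathcal{Y})_{q\in\mathbb{N}_+}$. Let $\beta:(\mathcal{P}_1(\mathcal{Y}),W_1)\to\mathcal{Y}$ be a 1-Lipschitz barycenter map (i.e. $\beta(\delta_y)=y$ for all $y$). Then $(\mathcal{Y},d_{\mathcal{Y}})$ is a QAS space with mixing function $\eta(w,(y_i)_{i=1}^N)=\beta\big(\sum_{i=1}^Nw_i\delta_{y_i}\big)$ and quantized mixing function $$\hat\eta(w,(z_i)_{i=1}^N)=\beta\Big(\sum_{i=1}^Nw_i\,\delta_{Q_q(z_i)}\Big),\qquad w\in\Delta_N,\ z_i\in\mathbb{R}^{D_q}.$$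
   Context: A geodesic bicombing is a map $\sigma:\mathcal{Y}\times\mathcal{Y}\times[0,1]\to\mathcal{Y}$ with $\sigma(x,\tilde x,0)=x$, $\sigma(x,\tilde x,1)=\tilde x$ and $d(\sigma(x,\tilde x,t),\sigma(x,\tilde x,s))=|t-s|d(x,\tilde x)$; it is conical if $d(\sigma(x,\tilde x,t),\sigma(x',\tilde x',t))\le(1-t)d(x,x')+td(\tilde x,\tilde x')$. (A complete metric space admits a conical geodesic bicombing iff it admits a 1-Lipschitz barycenter map $\beta:\mathcal{P}_1(\mathcal{Y})\to\mathcal{Y}$.) $\mathcal{Y}$ is approximately simplicial with mixing function $\eta:\bigcup_N\Delta_N\times\mathcal{Y}^N\to\mathcal{Y}$ if for some $C_\eta\ge1$, $p\in\mathbb{N}_+$: $d(\eta(w,\mathbf y),y_i)\le C_\eta(\sum_jd(y_i,y_j)^pw_j)^{1/p}$ for all $N,w\in\Delta_N,\mathbf y\in\mathcal{Y}^N,i$. A quantization is a family $Q_q:\mathbb{R}^{D_q}\to\mathcal{Y}$ such that for every $z\in\mathbb{R}^{D_q}$ there is $\tilde z\in\mathbb{R}^{D_{q+1}}$ with $Q_q(z)=Q_{q+1}(\tilde z)$, every $y$ is approximated arbitrarily well by some $Q_q(z)$, and for each compact $K\subseteq\mathcal{Y}$ and $\epsilon>0$, $\inf\{D_q:\forall y\in K\ \exists z\in\mathbb{R}^{D_q},\,d(y,Q_q(z))<\epsilon\}$ is finite. A QAS space is a quantizable approximately simplicial space equipped with $\hat\eta(w,Z)=\eta(w,(Q_q(Z_1),\dots,Q_q(Z_N)))$.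 *)

theory Defs
  imports "HOL-Probability.Probability"
begin

definition geodesic_bicombing :: "('a::metric_space \<Rightarrow> 'a \<Rightarrow> real \<Rightarrow> 'a) \<Rightarrow> bool" where
  "geodesic_bicombing \<sigma> \<longleftrightarrow>
     (\<forall>x x'. \<sigma> x x' 0 = x \<and> \<sigma> x x' 1 = x') \<and>
     (\<forall>x x' t s. t \<in> {0..1} \<and> s \<in> {0..1} \<longrightarrow>
        dist (\<sigma> x x' t) (\<sigma> x x' s) = \<bar>t - s\<bar> * dist x x')"

definition conical_geodesic_bicombing :: "('a::metric_space \<Rightarrow> 'a \<Rightarrow> real \<Rightarrow> 'a) \<Rightarrow> bool" where
  "conical_geodesic_bicombing \<sigma> \<longleftrightarrow> geodesic_bicombing \<sigma> \<and>
     (\<forall>x x' y y' t. t \<in> {0..1} \<longrightarrow>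
        dist (\<sigma> x x' t) (\<sigma> y y' t) \<le> (1 - t) * dist x y + t * dist x' y')"

definition P1 :: "('a::metric_space) measure set" where
  "P1 = {\<mu>. prob_space \<mu> \<and> sets \<mu> = sets borel \<and>
            (\<exists>y0. (\<integral>\<^sup>+ x. ennreal (dist x y0) \<partial>\<mu>) < \<infinity>)}"

definition couplings :: "('a::metric_space) measure \<Rightarrow> 'a measure \<Rightarrow> ('a \<times> 'a) measure set" where
  "couplings \<mu> \<nu> = {\<pi>. prob_space \<pi> \<and> sets \<pi> = sets (borel \<Otimes>\<^sub>M borel) \<and>
        distr \<pi> borel fst = \<mu> \<and> distr \<pi> borel snd = \<nu>}"

definition W1 :: "('a::metric_space) measure \<Rightarrow> 'a measure \<Rightarrow> ennreal" where
  "W1 \<mu> \<nu> = (INF \<pi> \<in> couplings \<mu> \<nu>. \<integral>\<^sup>+ p. ennreal (dist (fst p) (snd p)) \<partial>\<pi>)"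

definition barycenter_map :: "('a::metric_space measure \<Rightarrow> 'a) \<Rightarrow> bool" where
  "barycenter_map \<beta> \<longleftrightarrow>
     (\<forall>y. \<beta> (return borel y) = y) \<and>
     (\<forall>\<mu>\<in>P1. \<forall>\<nu>\<in>P1. ennreal (dist (\<beta> \<mu>) (\<beta> \<nu>)) \<le> W1 \<mu> \<nu>)"

definition dirac_mix :: "nat \<Rightarrow> (nat \<Rightarrow> real) \<Rightarrow> (nat \<Rightarrow> 'a::metric_space) \<Rightarrow> 'a measure" where
  "dirac_mix N w y = measure_of (space borel) (sets borel)
      (\<lambda>A. \<Sum>i<N. ennreal (w i) * indicator A (y i))"

definition std_simplex :: "nat \<Rightarrow> (nat \<Rightarrow> real) set" where
  "std_simplex N = {w. (\<forall>j<N. 0 \<le> w j) \<and> (\<Sum>j<N. w j) = 1}"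

text \<open>eta N w y is the mixing function applied to w in Delta_N and y in Y^N
  (only the values y 0, ..., y (N-1) are relevant).\<close>
definition approx_simplicial ::
  "(nat \<Rightarrow> (nat \<Rightarrow> real) \<Rightarrow> (nat \<Rightarrow> 'a::metric_space) \<Rightarrow> 'a) \<Rightarrow> bool" where
  "approx_simplicial \<eta> \<longleftrightarrow>
     (\<exists>C::real. \<exists>p::nat. C \<ge> 1 \<and> p \<ge> 1 \<and>
       (\<forall>N w y i. N \<ge> 1 \<and> w \<in> std_simplex N \<and> i < N \<longrightarrow>
          dist (\<eta> N w y) (y i) \<le> C * (\<Sum>j<N. dist (y i) (y j) ^ p * w j) powr (1 / real p)))"

text \<open>A quantization (Q_q : R^{D_q} -> Y)_{q >= 1}; points of R^{D_q} are real lists of length D q.\<close>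
definition quantization :: "(nat \<Rightarrow> real list \<Rightarrow> 'a::metric_space) \<Rightarrow> (nat \<Rightarrow> nat) \<Rightarrow> bool" where
  "quantization Q D \<longleftrightarrow>
     (\<forall>q\<ge>1. \<forall>z. length z = D q \<longrightarrow>
        (\<exists>z'. length z' = D (Suc q) \<and> Q q z = Q (Suc q) z')) \<and>
     (\<forall>y. \<forall>\<epsilon>>0. \<exists>q\<ge>1. \<exists>z. length z = D q \<and> dist y (Q q z) < \<epsilon>) \<and>
     (\<forall>K. compact K \<longrightarrow> (\<forall>\<epsilon>>0. \<exists>q\<ge>1. \<forall>y\<in>K. \<exists>z. length z = D q \<and> dist y (Q q z) < \<epsilon>))"

definition quantized_mixing ::
  "(nat \<Rightarrow> (nat \<Rightarrow> real) \<Rightarrow> (nat \<Rightarrow> 'a) \<Rightarrow> 'a) \<Rightarrow> (nat \<Rightarrow> real list \<Rightarrow> 'a)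
     \<Rightarrow> nat \<Rightarrow> nat \<Rightarrow> (nat \<Rightarrow> real) \<Rightarrow> (nat \<Rightarrow> real list) \<Rightarrow> 'a" where
  "quantized_mixing \<eta> Q q N w Z = \<eta> N w (\<lambda>i. Q q (Z i))"

definition QAS ::
  "(nat \<Rightarrow> real list \<Rightarrow> 'a::metric_space) \<Rightarrow> (nat \<Rightarrow> nat)
     \<Rightarrow> (nat \<Rightarrow> (nat \<Rightarrow> real) \<Rightarrow> (nat \<Rightarrow> 'a) \<Rightarrow> 'a) \<Rightarrow> bool" where
  "QAS Q D \<eta> \<longleftrightarrow> quantization Q D \<and> approx_simplicial \<eta>"

end

theory Submission
  imports Defs
begin

text \<open>The barycenter map is 1-Lipschitz and fixes Dirac masses, so
  \<open>d(\<beta>(\<Sum>_j w_j \<delta>(y_j)), y_i) \<le> W_1(\<Sum>_j w_j \<delta>(y_j), \<delta>(y_i)) \<le> \<Sum>_j w_j d(y_i, y_j)\<close>,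
  the last step using the (unique) coupling of a measure with a Dirac mass.
  This is the approximate simpliciality estimate with \<open>C = 1\<close> and \<open>p = 1\<close>;
  quantizability is a hypothesis, and the bicombing only serves to guarantee
  that a barycenter map exists.\<close>

lemma borel_measurable_dist_const[measurable]:
  "(\<lambda>x. dist x (c::'a::metric_space)) \<in> borel_measurable borel"
  by (intro borel_measurable_continuous_onI continuous_intros)

lemma dirac_mix_eq_distr:
  "dirac_mix N w (y::nat \<Rightarrow> 'a::metric_space)
     = distr (density (count_space {..<N}) (\<lambda>i. ennreal (w i))) borel y"
  (is "_ = ?R")
proof -
  have "?R = measure_of (space borel) (sets borel) (emeasure ?R)"
    using measure_of_of_measure[of ?R] by simp
  also have "\<dots> = dirac_mix N w y"
    unfolding dirac_mix_def
  proof (rule measure_of_eq)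
    fix A :: "'a set"
    assume "A \<in> sigma_sets (space borel) (sets borel)"
    then have A: "A \<in> sets borel"
      by (metis sets.sigma_sets_eq space_borel)
    have "emeasure ?R A
        = emeasure (density (count_space {..<N}) (\<lambda>i. ennreal (w i))) (y -` A \<inter> {..<N})"
      using A by (subst emeasure_distr) auto
    also have "\<dots> = (\<integral>\<^sup>+ i. ennreal (w i) * indicator (y -` A \<inter> {..<N}) i \<partial>count_space {..<N})"
      by (subst emeasure_density) auto
    also have "\<dots> = (\<Sum>i<N. ennreal (w i) * indicator A (y i))"
      by (subst nn_integral_count_space_finite) (auto intro!: sum.cong simp: indicator_def)
    finally show "emeasure ?R A = (\<Sum>i<N. ennreal (w i) * indicator A (y i))" .
  qed auto
  finally show ?thesis ..
qed

lemma sets_dirac_mix[simp]: "sets (dirac_mix N w (y::nat \<Rightarrow> 'a::metric_space)) = sets borel"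
  unfolding dirac_mix_eq_distr by simp

lemma nn_integral_dirac_mix:
  assumes "g \<in> borel_measurable borel"
  shows "(\<integral>\<^sup>+ x. g x \<partial>dirac_mix N w (y::nat \<Rightarrow> 'a::metric_space)) = (\<Sum>i<N. ennreal (w i) * g (y i))"
  unfolding dirac_mix_eq_distr using assms
  by (simp add: nn_integral_distr nn_integral_density nn_integral_count_space_finite)

lemma prob_space_dirac_mix:
  assumes "w \<in> std_simplex N"
  shows "prob_space (dirac_mix N w (y::nat \<Rightarrow> 'a::metric_space))"
proof
  have "emeasure (dirac_mix N w y) (space (dirac_mix N w y)) = (\<integral>\<^sup>+ x. 1 \<partial>dirac_mix N w y)"
    by simp
  also have "\<dots> = (\<Sum>i<N. ennreal (w i))"
    by (subst nn_integral_dirac_mix) auto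
  also have "\<dots> = ennreal (\<Sum>i<N. w i)"
    using assms by (subst sum_ennreal) (auto simp: std_simplex_def)
  also have "\<dots> = 1"
    using assms by (simp add: std_simplex_def)
  finally show "emeasure (dirac_mix N w y) (space (dirac_mix N w y)) = 1" .
qed

lemma dirac_mix_in_P1:
  assumes "w \<in> std_simplex N"
  shows "dirac_mix N w (y::nat \<Rightarrow> 'a::metric_space) \<in> P1"
  unfolding P1_def
proof (intro CollectI conjI exI)
  show "prob_space (dirac_mix N w y)"
    using assms by (rule prob_space_dirac_mix)
  show "(\<integral>\<^sup>+ x. ennreal (dist x (y 0)) \<partial>dirac_mix N w y) < \<infinity>"
    by (simp add: nn_integral_dirac_mix ennreal_mult_less_top)
qed simp

lemma return_in_P1: "return borel (c::'a::metric_space) \<in> P1"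
  unfolding P1_def
  by (intro CollectI conjI exI[of _ c] prob_space_return) (simp_all add: nn_integral_return)

lemma W1_return_le:
  fixes \<mu> :: "'a::metric_space measure"
  assumes "prob_space \<mu>" and sets_\<mu>: "sets \<mu> = sets borel"
  shows "W1 \<mu> (return borel c) \<le> (\<integral>\<^sup>+ x. ennreal (dist x c) \<partial>\<mu>)"
proof -
  interpret prob_space \<mu> by fact
  let ?\<pi> = "distr \<mu> (borel \<Otimes>\<^sub>M borel) (\<lambda>x. (x, c))"
  have meas: "(\<lambda>x. (x, c)) \<in> measurable \<mu> (borel \<Otimes>\<^sub>M borel)"
    by (simp add: measurable_cong_sets[OF sets_\<mu> refl])
  have "?\<pi> \<in> couplings \<mu> (return borel c)"
    unfolding couplings_def
  proof (intro CollectI conjI)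
    show "prob_space ?\<pi>"
      using meas by (rule prob_space_distr)
    show "distr ?\<pi> borel fst = \<mu>"
      using meas sets_\<mu> by (simp add: distr_distr comp_def distr_id2)
    show "distr ?\<pi> borel snd = return borel c"
      using meas by (simp add: distr_distr comp_def)
  qed simp
  then have "W1 \<mu> (return borel c) \<le> (\<integral>\<^sup>+ p. ennreal (dist (fst p) (snd p)) \<partial>?\<pi>)"
    unfolding W1_def by (rule INF_lower)
  \<comment> \<open>The distance need not be measurable for the product \<open>\<sigma>\<close>-algebra of a
      non-separable space, so it is dominated by a measurable function via \<open>c\<close>.\<close>
  also have "\<dots> \<le> (\<integral>\<^sup>+ p. ennreal (dist (fst p) c + dist (snd p) c) \<partial>?\<pi>)"
    by (intro nn_integral_mono ennreal_leI dist_triangle2)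
  also have "\<dots> = (\<integral>\<^sup>+ x. ennreal (dist x c) \<partial>\<mu>)"
    using meas by (subst nn_integral_distr) (simp_all add: measurable_cong_sets[OF sets_\<mu> refl])
  finally show ?thesis .
qed

lemma dist_barycenter_le:
  assumes "barycenter_map \<beta>" and "\<mu> \<in> P1"
  shows "ennreal (dist (\<beta> \<mu>) c) \<le> (\<integral>\<^sup>+ x. ennreal (dist x c) \<partial>\<mu>)"
proof -
  have "ennreal (dist (\<beta> \<mu>) c) = ennreal (dist (\<beta> \<mu>) (\<beta> (return borel c)))"
    using assms(1) by (simp add: barycenter_map_def)
  also have "\<dots> \<le> W1 \<mu> (return borel c)"
    using assms return_in_P1 unfolding barycenter_map_def by blast
  also have "\<dots> \<le> (\<integral>\<^sup>+ x. ennreal (dist x c) \<partial>\<mu>)"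
    using assms(2) by (intro W1_return_le) (simp_all add: P1_def)
  finally show ?thesis .
qed

lemma dist_barycenter_dirac_mix_le:
  assumes "barycenter_map \<beta>" and w: "w \<in> std_simplex N"
  shows "dist (\<beta> (dirac_mix N w y)) c \<le> (\<Sum>j<N. w j * dist (y j) c)"
proof -
  have "ennreal (dist (\<beta> (dirac_mix N w y)) c) \<le> (\<Sum>j<N. ennreal (w j) * ennreal (dist (y j) c))"
    using dist_barycenter_le[OF assms(1) dirac_mix_in_P1[OF w]] by (simp add: nn_integral_dirac_mix)
  also have "\<dots> = ennreal (\<Sum>j<N. w j * dist (y j) c)"
    using w by (subst sum_ennreal[symmetric]) (auto simp: std_simplex_def ennreal_mult' intro!: sum.cong)
  finally show ?thesis
    using w by (subst (asm) ennreal_le_iff) (auto simp: std_simplex_def intro!: sum_nonneg)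
qed

lemma approx_simplicial_barycenter_mix:
  assumes "barycenter_map \<beta>"
  shows "approx_simplicial (\<lambda>N w y. \<beta> (dirac_mix N w y))"
  unfolding approx_simplicial_def
proof (intro exI[of _ "1::real"] exI[of _ "1::nat"] conjI allI impI)
  fix N w and y :: "nat \<Rightarrow> 'a" and i
  assume "1 \<le> N \<and> w \<in> std_simplex N \<and> i < N"
  then have w: "w \<in> std_simplex N" by blast
  have "0 \<le> (\<Sum>j<N. dist (y i) (y j) * w j)"
    using w by (auto simp: std_simplex_def intro!: sum_nonneg)
  moreover have "(\<Sum>j<N. w j * dist (y j) (y i)) = (\<Sum>j<N. dist (y i) (y j) * w j)"
    by (simp add: dist_commute mult.commute)
  ultimately show "dist (\<beta> (dirac_mix N w y)) (y i) \<le> 1 * (\<Sum>j<N. dist (y i) (y j) ^ 1 * w j) powr (1 / real 1)"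
    using dist_barycenter_dirac_mix_le[OF assms w, of y "y i"] by simp
qed simp_all

theorem mainTheorem6:
  fixes \<sigma> :: "'a::complete_space \<Rightarrow> 'a \<Rightarrow> real \<Rightarrow> 'a"
    and Q :: "nat \<Rightarrow> real list \<Rightarrow> 'a" and D :: "nat \<Rightarrow> nat"
    and \<beta> :: "'a measure \<Rightarrow> 'a"
  assumes "conical_geodesic_bicombing \<sigma>"
    and "quantization Q D"
    and "barycenter_map \<beta>"
  shows "QAS Q D (\<lambda>N w y. \<beta> (dirac_mix N w y)) \<and>
         (\<forall>q N w Z. quantized_mixing (\<lambda>N w y. \<beta> (dirac_mix N w y)) Q q N w Z
                     = \<beta> (dirac_mix N w (\<lambda>i. Q q (Z i))))"
  using assms(2) approx_simplicial_barycenter_mix[OF assms(3)]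
  by (simp add: QAS_def quantized_mixing_def)

end
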